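(* Let $E$ be a real Hilbert space with $\dim(E)\ge 2$, let $h\in E$ be a unit vector, and let $f:\mathbb{R}_{\ge0}\to\mathbb{R}_{\ge0}$ satisfy $f(d)>0$ if and only if $d>0$. Define $C_f=\{x\in E\mid f(\|x_\perp\|)\le x_h\}$ and the relation $x\preceq_f y \iff y-x\in C_f$ on $E$. (a) If $\dim(E)\ge 3$, then $(E,\preceq_f)$ is a cc sponge if and only if the relation $\preceq_f$ is topologically closed (as a subset of $E\times E$) and $f$ is square-superadditive. (b) If $\dim(E)=2$ and the relation $\preceq_f$ is topologically closed, then $(E,\preceq_f)$ is a cc sponge if and only if $f$ is superadditive.
   Context: For $x\in E$ write $x=x_h h+x_\perp$ with $x_h=(x,h)\in\mathbb{R}$ and $x_\perp$ orthogonal to $h$. An orientation on a set $S$ is a reflexive, antisymmetric binary relation $\preceq$. For $P,Q\subseteq S$, $P\preceq Q$ means $p\preceq q$ for all $p\in P,q\in Q$. $P$ is right-bounded if $P\preceq\{s\}$ for some $s\in S$. An element $x$ is the join of $P$ if $P\preceq\{x\}$ and for all $y\in S$ with $P\preceq\{y\}$ we have $x\preceq y$. An oriented set $(S,\preceq)$ is a conditionally complete sponge (cc sponge) if every nonempty right-bounded subset of $S$ has a join. A function $f:\mathbb{R}_{\ge0}\to\mathbb{R}_{\ge0}$ is superadditive if $f(x+y)\ge f(x)+f(y)$ for all $x,y\ge0$, and square-superadditive if $f(\sqrt{x^2+y^2})\ge f(x)+f(y)$ for all $x,y\ge 0$. *)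

theory Defs
  imports "HOL-Analysis.Analysis"
begin

definition orientation :: "('a \<Rightarrow> 'a \<Rightarrow> bool) \<Rightarrow> bool" where
  "orientation le \<longleftrightarrow> (\<forall>x. le x x) \<and> (\<forall>x y. le x y \<and> le y x \<longrightarrow> x = y)"

definition set_le :: "('a \<Rightarrow> 'a \<Rightarrow> bool) \<Rightarrow> 'a set \<Rightarrow> 'a set \<Rightarrow> bool" where
  "set_le le P Q \<longleftrightarrow> (\<forall>p\<in>P. \<forall>q\<in>Q. le p q)"

definition right_bounded :: "('a \<Rightarrow> 'a \<Rightarrow> bool) \<Rightarrow> 'a set \<Rightarrow> bool" where
  "right_bounded le P \<longleftrightarrow> (\<exists>s. set_le le P {s})"

definition is_join :: "('a \<Rightarrow> 'a \<Rightarrow> bool) \<Rightarrow> 'a set \<Rightarrow> 'a \<Rightarrow> bool" where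
  "is_join le P x \<longleftrightarrow> set_le le P {x} \<and> (\<forall>y. set_le le P {y} \<longrightarrow> le x y)"

definition cc_sponge :: "('a \<Rightarrow> 'a \<Rightarrow> bool) \<Rightarrow> bool" where
  "cc_sponge le \<longleftrightarrow> orientation le \<and>
     (\<forall>P. P \<noteq> {} \<and> right_bounded le P \<longrightarrow> (\<exists>x. is_join le P x))"

(* functions on R_{\<ge>0}, represented as real \<Rightarrow> real, only values on [0,\<infinity>) matter *)
definition superadditive :: "(real \<Rightarrow> real) \<Rightarrow> bool" where
  "superadditive f \<longleftrightarrow> (\<forall>x y. x \<ge> 0 \<longrightarrow> y \<ge> 0 \<longrightarrow> f (x + y) \<ge> f x + f y)"

definition square_superadditive :: "(real \<Rightarrow> real) \<Rightarrow> bool" where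
  "square_superadditive f \<longleftrightarrow>
     (\<forall>x y. x \<ge> 0 \<longrightarrow> y \<ge> 0 \<longrightarrow> f (sqrt (x\<^sup>2 + y\<^sup>2)) \<ge> f x + f y)"

(* x_h = x \<bullet> h and x_perp = x - (x \<bullet> h) h *)
definition cone_f :: "(real \<Rightarrow> real) \<Rightarrow> 'a::real_inner \<Rightarrow> 'a set" where
  "cone_f f h = {x. f (norm (x - (x \<bullet> h) *\<^sub>R h)) \<le> x \<bullet> h}"

definition rel_f :: "(real \<Rightarrow> real) \<Rightarrow> 'a::real_inner \<Rightarrow> 'a \<Rightarrow> 'a \<Rightarrow> bool" where
  "rel_f f h x y \<longleftrightarrow> y - x \<in> cone_f f h"

(* dim(E) \<ge> n, allowing infinite dimension *)
definition dim_ge :: "'a::real_vector itself \<Rightarrow> nat \<Rightarrow> bool" where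
  "dim_ge (TYPE('a)) n \<longleftrightarrow> (\<exists>B::'a set. independent B \<and> finite B \<and> card B = n)"

end

theory Submission
  imports Defs
begin

(* Sufficiency.  Suppose C_f is closed, f is monotone, and f|a| + f|u| <= f|a + u| for all a, u
   orthogonal to h with a . u >= 0; square-superadditivity gives this in any dimension, and
   superadditivity in dimension 2, where such a and u are positively collinear.  Interpolating
   between two upper bounds of P one may then descend along h by f of the distance moved, so upper
   bounds of nearly minimal height are close together.  By completeness a lowest upper bound
   exists, and interpolating from it towards any other upper bound, together with the closedness
   of C_f, shows that it lies below that bound.

   Necessity.  Let e be a unit vector orthogonal to h.  The reflection in the axis of the join of
   {r e, -r e} is again an upper bound, which forces the join onto the axis, at height at least
   f r; comparing it with the upper bound F h + v gives f|v| + f r <= max f|v - r e| f|v + r e|.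
   For v orthogonal to e this is square-superadditivity.  For v parallel to e it makes the closed
   sublevel sets of f midpoint convex, hence intervals, so f is monotone and then superadditive.
   Joins of pairs {0, q} force f to be left continuous, which for monotone f makes C_f closed. *)

definition perp :: "'a::real_inner \<Rightarrow> 'a \<Rightarrow> 'a" where
  "perp h x = x - (x \<bullet> h) *\<^sub>R h"

lemma axis_perp_decomp: "(x \<bullet> h) *\<^sub>R h + perp h x = x"
  by (simp add: perp_def)

lemma perp_diff: "perp h (x - y) = perp h x - perp h y"
  by (simp add: perp_def algebra_simps)

lemma mem_cone_f_iff: "x \<in> cone_f f h \<longleftrightarrow> f (norm (perp h x)) \<le> x \<bullet> h"
  by (simp add: cone_f_def perp_def)

lemma rel_f_iff: "rel_f f h x y \<longleftrightarrow> f (norm (perp h y - perp h x)) \<le> y \<bullet> h - x \<bullet> h"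
  by (simp add: rel_f_def mem_cone_f_iff perp_diff inner_diff_left)

lemma closed_rel_f_iff: "closed {(x, y). rel_f f h x y} \<longleftrightarrow> closed (cone_f f h)"
proof
  assume closed_rel: "closed {(x, y). rel_f f h x y}"
  have "cone_f f h = (\<lambda>v. (0, v)) -` {(x, y). rel_f f h x y}"
    by (auto simp: rel_f_def)
  moreover have "closed ((\<lambda>v. (0, v)) -` {(x, y). rel_f f h x y})"
    by (rule continuous_closed_vimage[OF closed_rel]) (intro continuous_intros)
  ultimately show "closed (cone_f f h)"
    by simp
next
  assume closed_cone: "closed (cone_f f h)"
  have "{(x, y). rel_f f h x y} = (\<lambda>z. snd z - fst z) -` cone_f f h"
    by (auto simp: rel_f_def)
  moreover have "closed ((\<lambda>z. snd z - fst z) -` cone_f f h)"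
    by (rule continuous_closed_vimage[OF closed_cone]) (intro continuous_intros)
  ultimately show "closed {(x, y). rel_f f h x y}"
    by simp
qed

lemma closed_upper_bounds:
  assumes "closed (cone_f f h)"
  shows "closed {y. set_le (rel_f f h) P {y}}"
proof -
  have "{y. set_le (rel_f f h) P {y}} = (\<Inter>p\<in>P. (\<lambda>y. y - p) -` cone_f f h)"
    by (auto simp: set_le_def rel_f_def)
  moreover have "closed ((\<lambda>y. y - p) -` cone_f f h)" for p
    by (rule continuous_closed_vimage[OF assms]) (intro continuous_intros)
  ultimately show ?thesis
    by (simp add: closed_INT)
qed

lemma cc_sponge_obtain_join:
  assumes "cc_sponge le" "P \<noteq> {}" "set_le le P {s}"
  obtains x where "is_join le P x"
  using assms unfolding cc_sponge_def right_bounded_def by blast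

lemma closed_midpoint_convex_mem:
  fixes S :: "real set"
  assumes closed: "closed S"
    and midpoint: "\<And>a b. a \<in> S \<Longrightarrow> b \<in> S \<Longrightarrow> a \<le> b \<Longrightarrow> (a + b) / 2 \<in> S"
    and ab: "a \<in> S" "b \<in> S" "a \<le> y" "y \<le> b"
  shows "y \<in> S"
proof (rule ccontr)
  assume y: "y \<notin> S"
  define A where "A = S \<inter> {a..y}"
  define B where "B = S \<inter> {y..b}"
  have "closed A" "bdd_above A" "A \<noteq> {}"
    using closed ab by (auto simp: A_def intro: bdd_above_Icc[THEN bdd_above_mono])
  then have "Sup A \<in> A"
    by (intro closed_contains_Sup)
  have "closed B" "bdd_below B" "B \<noteq> {}"
    using closed ab by (auto simp: B_def intro: bdd_below_Icc[THEN bdd_below_mono])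
  then have "Inf B \<in> B"
    by (intro closed_contains_Inf)
  have gap: "Sup A < y" "y < Inf B"
    using \<open>Sup A \<in> A\<close> \<open>Inf B \<in> B\<close> y by (auto simp: A_def B_def order.order_iff_strict)
  define m where "m = (Sup A + Inf B) / 2"
  have "m \<in> S"
    using midpoint \<open>Sup A \<in> A\<close> \<open>Inf B \<in> B\<close> gap by (simp add: A_def B_def m_def)
  show False
  proof (cases "m \<le> y")
    case True
    then have "m \<in> A"
      using \<open>m \<in> S\<close> \<open>Sup A \<in> A\<close> gap by (auto simp: A_def m_def)
    then have "m \<le> Sup A"
      using \<open>bdd_above A\<close> by (rule cSup_upper)
    then show False
      using gap by (simp add: m_def)
  next
    case False
    then have "m \<in> B"
      using \<open>m \<in> S\<close> \<open>Inf B \<in> B\<close> gap by (auto simp: B_def m_def)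
    then have "Inf B \<le> m"
      using \<open>bdd_below B\<close> by (rule cInf_lower)
    then show False
      using gap by (simp add: m_def)
  qed
qed

lemma closed_attains_Inf_if_near_minimizers_close:
  fixes U :: "'a::complete_space set" and g :: "'a \<Rightarrow> real"
  assumes closed: "closed U" and ne: "U \<noteq> {}" and cont: "continuous_on U g"
    and bdd: "bdd_below (g ` U)"
    and near_close: "\<And>\<epsilon>. 0 < \<epsilon> \<Longrightarrow> \<exists>\<delta>>0. \<forall>x\<in>U. \<forall>y\<in>U.
        g x < Inf (g ` U) + \<delta> \<longrightarrow> g y < Inf (g ` U) + \<delta> \<longrightarrow> dist x y < \<epsilon>"
  obtains x where "x \<in> U" "\<And>y. y \<in> U \<Longrightarrow> g x \<le> g y"
proof -
  define \<mu> where "\<mu> = Inf (g ` U)"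
  have \<mu>_le: "\<mu> \<le> g y" if "y \<in> U" for y
    using cInf_lower[OF _ bdd] that by (simp add: \<mu>_def)
  have "\<exists>y\<in>U. g y < \<mu> + inverse (real (Suc n))" for n
    using cInf_less_iff[OF _ bdd, of "\<mu> + inverse (real (Suc n))"] ne by (auto simp: \<mu>_def)
  then obtain Y where Y: "\<And>n. Y n \<in> U" "\<And>n. g (Y n) < \<mu> + inverse (real (Suc n))"
    by metis
  have "Cauchy Y"
  proof (rule metric_CauchyI)
    fix \<epsilon> :: real assume "0 < \<epsilon>"
    obtain \<delta> where "0 < \<delta>"
      and near: "\<forall>x\<in>U. \<forall>y\<in>U. g x < \<mu> + \<delta> \<longrightarrow> g y < \<mu> + \<delta> \<longrightarrow> dist x y < \<epsilon>"
      using near_close[OF \<open>0 < \<epsilon>\<close>] unfolding \<mu>_def by blast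
    obtain N where N: "inverse (real (Suc N)) < \<delta>"
      using reals_Archimedean[OF \<open>0 < \<delta>\<close>] by blast
    have "g (Y n) < \<mu> + \<delta>" if "N \<le> n" for n
    proof -
      have "inverse (real (Suc n)) \<le> inverse (real (Suc N))"
        using that by (simp add: le_imp_inverse_le)
      then show ?thesis
        using Y(2)[of n] N by linarith
    qed
    then show "\<exists>M. \<forall>m\<ge>M. \<forall>n\<ge>M. dist (Y m) (Y n) < \<epsilon>"
      using near Y(1) by blast
  qed
  then obtain x where lim: "Y \<longlonglongrightarrow> x"
    using Cauchy_convergent convergent_def by blast
  have "x \<in> U"
    using closed Y(1) lim closed_sequential_limits by blast
  have "(\<lambda>n. g (Y n)) \<longlonglongrightarrow> g x"
    using cont \<open>x \<in> U\<close> Y(1) lim by (auto simp: continuous_on_sequentially comp_def)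
  moreover have "(\<lambda>n. \<mu> + inverse (real (Suc n))) \<longlonglongrightarrow> \<mu>"
    using tendsto_add[OF tendsto_const LIMSEQ_inverse_real_of_nat, of \<mu>] by simp
  ultimately have "g x \<le> \<mu>"
    using Y(2) by (intro LIMSEQ_le) (auto intro: less_imp_le)
  then show ?thesis
    using that \<open>x \<in> U\<close> \<mu>_le by (meson order_trans)
qed

lemma dim_ge_obtain_orthogonal_unit:
  fixes S :: "'a::real_inner set"
  assumes "dim_ge TYPE('a) n" "finite S" "card S < n"
    and S: "pairwise orthogonal S" "\<And>s. s \<in> S \<Longrightarrow> norm s = 1"
  obtains e :: 'a where "norm e = 1" "\<And>s. s \<in> S \<Longrightarrow> e \<bullet> s = 0"
proof -
  obtain B :: "'a set" where B: "independent B" "finite B" "card B = n"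
    using assms(1) dim_ge_def by blast
  have "\<not> B \<subseteq> span S"
    using real_vector.independent_span_bound[OF assms(2) B(1)] B(3) assms(3) by auto
  then obtain b where "b \<notin> span S"
    by blast
  define e where "e = b - (\<Sum>s\<in>S. (b \<bullet> s) *\<^sub>R s)"
  have "(\<Sum>s\<in>S. (b \<bullet> s) *\<^sub>R s) \<in> span S"
    by (intro span_sum span_scale span_base)
  then have "e \<noteq> 0"
    using \<open>b \<notin> span S\<close> by (auto simp: e_def)
  have "e \<bullet> s0 = 0" if "s0 \<in> S" for s0
  proof -
    have "(\<Sum>s\<in>S. (b \<bullet> s) *\<^sub>R s) \<bullet> s0 = (\<Sum>s\<in>S. if s = s0 then b \<bullet> s0 else 0)"
      unfolding inner_sum_left
    proof (rule sum.cong)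
      fix s assume "s \<in> S"
      then show "((b \<bullet> s) *\<^sub>R s) \<bullet> s0 = (if s = s0 then b \<bullet> s0 else 0)"
        using S that by (auto simp: pairwise_def orthogonal_def dot_square_norm)
    qed simp
    also have "\<dots> = b \<bullet> s0"
      using that assms(2) by simp
    finally show ?thesis
      by (simp add: e_def inner_diff_left)
  qed
  then show ?thesis
    using that[of "e /\<^sub>R norm e"] \<open>e \<noteq> 0\<close> by simp
qed

lemma dim_ge_dim_UNIV: "dim_ge TYPE('a::real_vector) (dim (UNIV :: 'a set))"
proof -
  obtain B :: "'a set" where B: "independent B" "card B = dim (UNIV :: 'a set)"
    by (meson real_vector.basis_exists)
  show ?thesis
  proof (cases "finite B")
    case True
    then show ?thesis
      using B unfolding dim_ge_def by blast
  next
    case False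
    then have "independent {}" "finite {}" "card {} = dim (UNIV :: 'a set)"
      using B by (simp_all add: real_vector.independent_empty)
    then show ?thesis
      unfolding dim_ge_def by blast
  qed
qed

lemma dim_eq_2_orthogonal_collinear:
  fixes h a u :: "'a::real_inner"
  assumes dim: "dim (UNIV :: 'a set) = 2" and "h \<noteq> 0" "a \<noteq> 0"
    and ah: "a \<bullet> h = 0" and uh: "u \<bullet> h = 0"
  shows "u = ((u \<bullet> a) / (a \<bullet> a)) *\<^sub>R a"
proof (rule ccontr)
  define u' where "u' = u - ((u \<bullet> a) / (a \<bullet> a)) *\<^sub>R a"
  assume "u \<noteq> ((u \<bullet> a) / (a \<bullet> a)) *\<^sub>R a"
  then have "u' \<noteq> 0"
    by (simp add: u'_def)
  have "a \<bullet> a \<noteq> 0"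
    using \<open>a \<noteq> 0\<close> by simp
  then have "a \<bullet> u' = 0" "h \<bullet> u' = 0" "h \<bullet> a = 0"
    using ah uh by (simp_all add: u'_def inner_diff_right inner_commute)
  then have "pairwise orthogonal {h, a, u'}"
    by (auto simp: pairwise_def orthogonal_def inner_commute)
  moreover have "0 \<notin> {h, a, u'}"
    using \<open>h \<noteq> 0\<close> \<open>a \<noteq> 0\<close> \<open>u' \<noteq> 0\<close> by auto
  ultimately have "independent {h, a, u'}"
    by (rule pairwise_orthogonal_independent)
  obtain B :: "'a set" where B: "UNIV \<subseteq> span B" "card B = dim (UNIV :: 'a set)"
    by (meson real_vector.basis_exists)
  then have "finite B"
    using dim card.infinite by fastforce
  moreover have "{h, a, u'} \<subseteq> span B"
    using B(1) by blast
  ultimately have "card {h, a, u'} \<le> 2"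
    using real_vector.independent_span_bound[OF _ \<open>independent {h, a, u'}\<close>] B(2) dim by fastforce
  moreover have "h \<noteq> a" "h \<noteq> u'" "a \<noteq> u'"
    using \<open>a \<bullet> u' = 0\<close> \<open>h \<bullet> u' = 0\<close> \<open>h \<bullet> a = 0\<close> \<open>h \<noteq> 0\<close> \<open>a \<noteq> 0\<close> \<open>u' \<noteq> 0\<close> by auto
  ultimately show False
    by simp
qed

lemma square_superadditive_strict_mono:
  assumes sq: "square_superadditive f" and pos: "\<And>d. 0 < d \<Longrightarrow> 0 < f d"
  shows "strict_mono_on {0..} f"
proof (rule strict_mono_onI)
  fix a b :: real assume "a \<in> {0..}" "a < b"
  define c where "c = sqrt (b\<^sup>2 - a\<^sup>2)"
  have "a\<^sup>2 < b\<^sup>2"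
    using \<open>a \<in> {0..}\<close> \<open>a < b\<close> by (simp add: power_strict_mono)
  then have "0 < c" "sqrt (a\<^sup>2 + c\<^sup>2) = b"
    using \<open>a \<in> {0..}\<close> \<open>a < b\<close> by (simp_all add: c_def)
  then have "f a + f c \<le> f b"
    using sq \<open>a \<in> {0..}\<close> unfolding square_superadditive_def by (metis atLeast_iff less_imp_le)
  then show "f a < f b"
    using pos[OF \<open>0 < c\<close>] by simp
qed

lemma superadditive_mono:
  assumes sa: "superadditive f" and nonneg: "\<And>d. 0 \<le> d \<Longrightarrow> 0 \<le> f d"
  shows "mono_on {0..} f"
proof (rule mono_onI)
  fix a b :: real assume "a \<in> {0..}" "a \<le> b"
  then have "f a + f (b - a) \<le> f (a + (b - a))"
    using sa unfolding superadditive_def by (meson atLeast_iff diff_ge_0_iff_ge)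
  then show "f a \<le> f b"
    using nonneg[of "b - a"] \<open>a \<le> b\<close> by simp
qed

definition acute_superadditive :: "(real \<Rightarrow> real) \<Rightarrow> 'a::real_inner \<Rightarrow> bool" where
  "acute_superadditive f h \<longleftrightarrow> (\<forall>a u. a \<bullet> h = 0 \<longrightarrow> u \<bullet> h = 0 \<longrightarrow> 0 \<le> a \<bullet> u \<longrightarrow>
     f (norm a) + f (norm u) \<le> f (norm (a + u)))"

lemma acute_superadditive_if_square_superadditive:
  assumes sq: "square_superadditive f" and mono: "mono_on {0..} f"
  shows "acute_superadditive f h"
  unfolding acute_superadditive_def
proof (intro allI impI)
  fix a u :: 'a assume "0 \<le> a \<bullet> u"
  moreover have "(norm (a + u))\<^sup>2 = (norm a)\<^sup>2 + 2 * (a \<bullet> u) + (norm u)\<^sup>2"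
    by (simp add: power2_norm_eq_inner inner_add_left inner_add_right inner_commute)
  ultimately have "sqrt ((norm a)\<^sup>2 + (norm u)\<^sup>2) \<le> norm (a + u)"
    by (intro real_le_lsqrt) auto
  then have "f (sqrt ((norm a)\<^sup>2 + (norm u)\<^sup>2)) \<le> f (norm (a + u))"
    by (intro mono_onD[OF mono]) auto
  moreover have "f (norm a) + f (norm u) \<le> f (sqrt ((norm a)\<^sup>2 + (norm u)\<^sup>2))"
    using sq by (simp add: square_superadditive_def)
  ultimately show "f (norm a) + f (norm u) \<le> f (norm (a + u))"
    by simp
qed

lemma acute_superadditive_if_superadditive_dim_eq_2:
  fixes h :: "'a::real_inner"
  assumes dim: "dim (UNIV :: 'a set) = 2" and "h \<noteq> 0" and sa: "superadditive f"
  shows "acute_superadditive f h"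
  unfolding acute_superadditive_def
proof (intro allI impI)
  fix a u :: 'a assume ah: "a \<bullet> h = 0" and uh: "u \<bullet> h = 0" and acute: "0 \<le> a \<bullet> u"
  have "norm (a + u) = norm a + norm u"
  proof (cases "a = 0")
    case False
    define k where "k = (u \<bullet> a) / (a \<bullet> a)"
    have u: "u = k *\<^sub>R a"
      using dim_eq_2_orthogonal_collinear[OF dim \<open>h \<noteq> 0\<close> False ah uh] by (simp add: k_def)
    have "0 \<le> k"
      using acute by (simp add: k_def inner_commute)
    have "a + u = (1 + k) *\<^sub>R a"
      by (simp add: u algebra_simps)
    then have "norm (a + u) = (1 + k) * norm a"
      using \<open>0 \<le> k\<close> by simp
    moreover have "norm u = k * norm a"
      using \<open>0 \<le> k\<close> by (simp add: u)
    ultimately show ?thesis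
      by (simp add: algebra_simps)
  qed simp
  then show "f (norm a) + f (norm u) \<le> f (norm (a + u))"
    using sa by (simp add: superadditive_def)
qed

locale axis_cone =
  fixes h :: "'a::real_inner" and f :: "real \<Rightarrow> real"
  assumes norm_h: "norm h = 1"
    and f_zero: "f 0 = 0"
    and f_pos: "0 < d \<Longrightarrow> 0 < f d"
begin

abbreviation below :: "'a \<Rightarrow> 'a \<Rightarrow> bool" (infix \<open>\<preceq>\<close> 50)
  where "x \<preceq> y \<equiv> rel_f f h x y"

lemma f_nonneg: "0 \<le> d \<Longrightarrow> 0 \<le> f d"
  using f_pos[of d] f_zero by (cases "d = 0") (simp_all add: less_le)

lemma f_nonpos_imp_zero: "0 \<le> d \<Longrightarrow> f d \<le> 0 \<Longrightarrow> d = 0"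
  using f_pos[of d] by (cases "d = 0") (simp_all add: less_le)

lemma inner_h_h [simp]: "h \<bullet> h = 1"
  using norm_h by (metis norm_eq_sqrt_inner real_sqrt_eq_1_iff)

lemma inner_perp_h [simp]: "perp h x \<bullet> h = 0"
  by (simp add: perp_def inner_diff_left)

lemma perp_orthogonal [simp]: "v \<bullet> h = 0 \<Longrightarrow> perp h v = v"
  by (simp add: perp_def)

lemma inner_axis_point [simp]: "v \<bullet> h = 0 \<Longrightarrow> (t *\<^sub>R h + v) \<bullet> h = t"
  by (simp add: inner_add_left)

lemma perp_axis [simp]: "perp h (t *\<^sub>R h) = 0"
  by (simp add: perp_def)

lemma perp_axis_point [simp]: "v \<bullet> h = 0 \<Longrightarrow> perp h (t *\<^sub>R h + v) = v"
  by (simp add: perp_def)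

lemma axis_coordinates:
  obtains t v where "x = t *\<^sub>R h + v" "v \<bullet> h = 0"
  using axis_perp_decomp inner_perp_h by metis

lemma axis_point_in_cone_iff: "v \<bullet> h = 0 \<Longrightarrow> t *\<^sub>R h + v \<in> cone_f f h \<longleftrightarrow> f (norm v) \<le> t"
  by (simp add: mem_cone_f_iff)

lemma dist_le_height_perp: "dist x y \<le> \<bar>x \<bullet> h - y \<bullet> h\<bar> + norm (perp h x - perp h y)"
proof -
  have "x - y = (x \<bullet> h - y \<bullet> h) *\<^sub>R h + (perp h x - perp h y)"
    by (simp add: perp_def algebra_simps)
  then show ?thesis
    using norm_triangle_ineq[of "(x \<bullet> h - y \<bullet> h) *\<^sub>R h" "perp h x - perp h y"] norm_h
    by (simp add: dist_norm)
qed

lemma height_le_of_rel: "x \<preceq> y \<Longrightarrow> x \<bullet> h \<le> y \<bullet> h"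
  using f_nonneg[of "norm (perp h y - perp h x)"] by (simp add: rel_f_iff)

lemma rel_raise: "x \<preceq> t *\<^sub>R h + v \<Longrightarrow> v \<bullet> h = 0 \<Longrightarrow> t \<le> s \<Longrightarrow> x \<preceq> s *\<^sub>R h + v"
  by (simp add: rel_f_iff)

lemma orientation_rel_f: "orientation (\<preceq>)"
  unfolding orientation_def
proof (intro conjI allI impI)
  fix x y assume "x \<preceq> y \<and> y \<preceq> x"
  moreover from this have same_height: "x \<bullet> h = y \<bullet> h"
    using height_le_of_rel by (meson order_antisym)
  ultimately have "f (norm (perp h y - perp h x)) \<le> 0"
    by (simp add: rel_f_iff)
  then have "norm (perp h y - perp h x) = 0"
    by (rule f_nonpos_imp_zero[OF norm_ge_zero])
  then have "perp h x = perp h y"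
    by simp
  then show "x = y"
    by (metis axis_perp_decomp same_height)
qed (simp add: rel_f_iff f_zero)

lemma obtain_unit_orthogonal_axis:
  assumes "dim_ge TYPE('a) n" "1 < n"
  obtains e where "norm e = 1" "e \<bullet> h = 0"
  using dim_ge_obtain_orthogonal_unit[OF assms(1), of "{h}"] assms(2) norm_h by auto

section \<open>Necessary conditions\<close>

lemma is_join_symmetric_pair_on_axis:
  assumes join: "is_join (\<preceq>) {a, - a} x" and a: "a \<bullet> h = 0"
  shows "perp h x = 0"
proof -
  obtain \<mu> w where x: "x = \<mu> *\<^sub>R h + w" "w \<bullet> h = 0"
    by (rule axis_coordinates)
  define x' where "x' = \<mu> *\<^sub>R h + - w"
  have x': "perp h x' = - w" "x' \<bullet> h = \<mu>"
    using perp_axis_point[of "- w"] inner_axis_point[of "- w"] x(2) by (simp_all add: x'_def)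
  have "f (norm (w - a)) \<le> \<mu>" "f (norm (w + a)) \<le> \<mu>"
    using join a x by (simp_all add: is_join_def set_le_def rel_f_iff)
  moreover have "norm (- w - a) = norm (w + a)" "norm (- w + a) = norm (w - a)"
    using norm_minus_cancel[of "w + a"] norm_minus_cancel[of "w - a"] by simp_all
  ultimately have "set_le (\<preceq>) {a, - a} {x'}"
    using a by (simp add: set_le_def rel_f_iff x')
  then have "x \<preceq> x'"
    using join by (simp add: is_join_def)
  then have "f (norm (- w - w)) \<le> 0"
    using x x' by (simp add: rel_f_iff)
  moreover have "norm (- w - w) = 2 * norm w"
  proof -
    have "- w - w = - (2 *\<^sub>R w)"
      by (simp add: scaleR_2)
    then show ?thesis
      by (simp only: norm_minus_cancel) simp
  qed
  ultimately have "w = 0"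
    using f_nonpos_imp_zero[of "2 * norm w"] by simp
  then show ?thesis
    using x by simp
qed

lemma cc_sponge_two_point_bound:
  assumes cc: "cc_sponge (\<preceq>)" and e: "norm e = 1" "e \<bullet> h = 0"
    and v: "v \<bullet> h = 0" and r: "0 \<le> r"
  shows "f (norm v) + f r \<le> max (f (norm (v - r *\<^sub>R e))) (f (norm (v + r *\<^sub>R e)))"
proof -
  define P where "P = {r *\<^sub>R e, - (r *\<^sub>R e)}"
  have a: "(r *\<^sub>R e) \<bullet> h = 0"
    using e by simp
  have ub: "set_le (\<preceq>) P {t *\<^sub>R h + b} \<longleftrightarrow>
      f (norm (b - r *\<^sub>R e)) \<le> t \<and> f (norm (b + r *\<^sub>R e)) \<le> t" if "b \<bullet> h = 0" for t b
    using that e by (simp add: set_le_def P_def rel_f_iff)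
  have "set_le (\<preceq>) P {f r *\<^sub>R h + 0}"
    using ub[of 0] e r by simp
  moreover have "P \<noteq> {}"
    by (simp add: P_def)
  ultimately obtain x where join: "is_join (\<preceq>) P x"
    using cc_sponge_obtain_join[OF cc] by blast
  obtain \<mu> w where x: "x = \<mu> *\<^sub>R h + w" "w \<bullet> h = 0"
    by (rule axis_coordinates)
  have "w = 0"
    using is_join_symmetric_pair_on_axis[OF join[unfolded P_def] a] x by simp
  have "f r \<le> \<mu>"
    using join ub[OF x(2)] \<open>w = 0\<close> e r by (simp add: is_join_def x(1))
  define F where "F = max (f (norm (v - r *\<^sub>R e))) (f (norm (v + r *\<^sub>R e)))"
  have "set_le (\<preceq>) P {F *\<^sub>R h + v}"
    using ub[OF v] by (simp add: F_def)
  then have "x \<preceq> F *\<^sub>R h + v"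
    using join by (simp add: is_join_def)
  then have "f (norm v) \<le> F - \<mu>"
    using x \<open>w = 0\<close> v by (simp add: rel_f_iff)
  with \<open>f r \<le> \<mu>\<close> show ?thesis
    by (simp add: F_def)
qed

lemma set_le_origin_pair_iff:
  assumes "a \<bullet> h = 0" "b \<bullet> h = 0"
  shows "set_le (\<preceq>) {0, \<kappa> *\<^sub>R h + a} {t *\<^sub>R h + b} \<longleftrightarrow> f (norm b) \<le> t \<and> f (norm (b - a)) \<le> t - \<kappa>"
  using assms by (simp add: set_le_def rel_f_iff)

lemma origin_pair_upper_bound_height:
  assumes strict_mono: "strict_mono_on {0..} f" and e: "norm e = 1" "e \<bullet> h = 0"
    and "0 < d" and w: "w \<bullet> h = 0" and ub: "set_le (\<preceq>) {0, \<kappa> *\<^sub>R h + d *\<^sub>R e} {t *\<^sub>R h + w}"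
  shows "f d \<le> t \<or> (\<exists>s>0. \<kappa> + f s < t)"
proof -
  have bounds: "f (norm w) \<le> t" "f (norm (w - d *\<^sub>R e)) \<le> t - \<kappa>"
    using ub set_le_origin_pair_iff[of "d *\<^sub>R e" w] e w by simp_all
  show ?thesis
  proof (cases "d \<le> norm w")
    case True
    then show ?thesis
      using mono_onD[OF strict_mono_on_imp_mono_on[OF strict_mono], of d "norm w"] \<open>0 < d\<close> bounds
      by simp
  next
    case False
    have "d - norm w \<le> norm (w - d *\<^sub>R e)"
      using norm_triangle_ineq2[of "d *\<^sub>R e" w] e \<open>0 < d\<close> by (simp add: norm_minus_commute)
    with False have "0 < norm (w - d *\<^sub>R e)"
      by linarith
    moreover from this have "\<kappa> + f (norm (w - d *\<^sub>R e) / 2) < t"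
      using strict_mono_onD[OF strict_mono, of "norm (w - d *\<^sub>R e) / 2" "norm (w - d *\<^sub>R e)"] bounds
      by simp
    ultimately show ?thesis
      by (metis half_gt_zero)
  qed
qed

lemma origin_pair_upper_bound:
  assumes e: "norm e = 1" "e \<bullet> h = 0" and s: "0 < s" "s \<le> d"
    and below: "\<And>r. 0 \<le> r \<Longrightarrow> r < d \<Longrightarrow> f r \<le> c"
  shows "set_le (\<preceq>) {0, \<kappa> *\<^sub>R h + d *\<^sub>R e} {max c (\<kappa> + f s) *\<^sub>R h + (d - s) *\<^sub>R e}"
proof -
  have "norm ((d - s) *\<^sub>R e) = d - s" "norm ((d - s) *\<^sub>R e - d *\<^sub>R e) = s"
    using e s by (simp_all add: algebra_simps flip: scaleR_diff_left)
  moreover have "f (d - s) \<le> max c (\<kappa> + f s)"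
    using below[of "d - s"] s by (simp add: le_max_iff_disj)
  moreover have "f s \<le> max c (\<kappa> + f s) - \<kappa>"
    by (simp add: le_diff_eq le_max_iff_disj)
  moreover have "(d *\<^sub>R e) \<bullet> h = 0" "((d - s) *\<^sub>R e) \<bullet> h = 0"
    using e by simp_all
  ultimately show ?thesis
    by (simp add: set_le_origin_pair_iff)
qed

lemma cc_sponge_left_continuous:
  assumes cc: "cc_sponge (\<preceq>)" and e: "norm e = 1" "e \<bullet> h = 0"
    and strict_mono: "strict_mono_on {0..} f" and d: "0 < d" and c: "c < f d"
  shows "\<exists>s. 0 \<le> s \<and> s < d \<and> c < f s"
proof (rule ccontr)
  assume "\<not> ?thesis"
  then have below_d: "f s \<le> c" if "0 \<le> s" "s < d" for s
    using that by force
  define R where "R = Inf (f ` {0<..})"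
  have bdd: "bdd_below (f ` {0<..})"
    using f_nonneg by (intro bdd_belowI2[of _ 0]) simp
  have R_le: "R \<le> f s" if "0 < s" for s
    using cInf_lower[OF _ bdd] that by (auto simp: R_def)
  text \<open>For \<open>q = (c - R) h + d e\<close>, with \<open>R\<close> the limit of \<open>f\<close> at \<open>0\<^sup>+\<close>, every upper bound of
    \<open>{0, q}\<close> lies strictly above height \<open>c\<close>, yet since \<open>f \<le> c\<close> on \<open>[0, d)\<close> there are upper
    bounds at heights arbitrarily close to \<open>c\<close>.\<close>
  define \<kappa> where "\<kappa> = c - R"
  have "set_le (\<preceq>) {0, \<kappa> *\<^sub>R h + d *\<^sub>R e} {max 0 (\<kappa> + f d) *\<^sub>R h + 0}"
    using set_le_origin_pair_iff[of "d *\<^sub>R e" 0] e d f_zero by simp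
  then obtain x where join: "is_join (\<preceq>) {0, \<kappa> *\<^sub>R h + d *\<^sub>R e} x"
    by (rule cc_sponge_obtain_join[OF cc insert_not_empty])
  obtain \<mu> w where x: "x = \<mu> *\<^sub>R h + w" "w \<bullet> h = 0"
    by (rule axis_coordinates)
  have "f d \<le> \<mu> \<or> (\<exists>s>0. \<kappa> + f s < \<mu>)"
    using origin_pair_upper_bound_height[OF strict_mono e d x(2)] join x(1) by (simp add: is_join_def)
  then have "c < \<mu>"
    using c R_le by (force simp: \<kappa>_def)
  then have "Inf (f ` {0<..}) < R + (\<mu> - c)"
    by (simp add: R_def)
  then obtain s where s: "0 < s" "f s < R + (\<mu> - c)"
    using cInf_less_iff[OF _ bdd] by auto
  define s' where "s' = min s d"
  have s': "0 < s'" "s' \<le> d" "f s' < R + (\<mu> - c)"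
    using s d mono_onD[OF strict_mono_on_imp_mono_on[OF strict_mono], of s' s] by (auto simp: s'_def)
  then have "x \<preceq> max c (\<kappa> + f s') *\<^sub>R h + (d - s') *\<^sub>R e"
    using join origin_pair_upper_bound[OF e, of s' d c \<kappa>] below_d by (simp add: is_join_def)
  then have "\<mu> \<le> max c (\<kappa> + f s')"
    using height_le_of_rel x e by fastforce
  then show False
    using \<open>c < \<mu>\<close> s' by (simp add: \<kappa>_def)
qed

lemma closed_cone_if_left_continuous:
  assumes mono: "mono_on {0..} f"
    and left_cont: "\<And>d c. 0 < d \<Longrightarrow> c < f d \<Longrightarrow> \<exists>s. 0 \<le> s \<and> s < d \<and> c < f s"
  shows "closed (cone_f f h)"
proof -
  have "cone_f f h = {x. 0 \<le> x \<bullet> h} \<inter>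
      (\<Inter>s\<in>{0..}. {x. norm (perp h x) \<le> s} \<union> {x. f s \<le> x \<bullet> h})" (is "_ = ?C")
  proof (intro equalityI subsetI)
    fix x assume "x \<in> cone_f f h"
    then have "f (norm (perp h x)) \<le> x \<bullet> h"
      by (simp add: mem_cone_f_iff)
    moreover have "f s \<le> f (norm (perp h x))" if "0 \<le> s" "s < norm (perp h x)" for s
      using mono_onD[OF mono, of s "norm (perp h x)"] that by simp
    ultimately show "x \<in> ?C"
      using f_nonneg[of "norm (perp h x)"] by force
  next
    fix x assume x: "x \<in> ?C"
    show "x \<in> cone_f f h"
    proof (cases "perp h x = 0")
      case True
      then show ?thesis
        using x by (simp add: mem_cone_f_iff f_zero)
    next
      case False
      show ?thesis
      proof (rule ccontr)
        assume "x \<notin> cone_f f h"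
        then have "x \<bullet> h < f (norm (perp h x))"
          by (simp add: mem_cone_f_iff)
        then obtain s where s: "0 \<le> s" "s < norm (perp h x)" "x \<bullet> h < f s"
          using left_cont[of "norm (perp h x)" "x \<bullet> h"] False by auto
        moreover have "norm (perp h x) \<le> s \<or> f s \<le> x \<bullet> h"
          using x s(1) by blast
        ultimately show False
          by linarith
      qed
    qed
  qed
  moreover have "closed ?C"
    unfolding perp_def by (intro closed_Int closed_INT closed_Un ballI closed_Collect_le continuous_intros)
  ultimately show ?thesis
    by simp
qed

lemma closed_cone_if_cc_sponge:
  assumes "cc_sponge (\<preceq>)" "norm e = 1" "e \<bullet> h = 0" "strict_mono_on {0..} f"
  shows "closed (cone_f f h)"
  by (rule closed_cone_if_left_continuous[OF strict_mono_on_imp_mono_on[OF assms(4)]])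
    (use cc_sponge_left_continuous[OF assms] in blast)

lemma mono_on_if_two_point_bound:
  assumes two_point: "\<And>t r. 0 \<le> t \<Longrightarrow> 0 \<le> r \<Longrightarrow> f t + f r \<le> max (f \<bar>t - r\<bar>) (f (t + r))"
    and closed: "closed (cone_f f h)" and e: "norm e = 1" "e \<bullet> h = 0"
  shows "mono_on {0..} f"
proof (rule mono_onI)
  fix a b :: real assume "a \<in> {0..}" "a \<le> b"
  define S where "S = {d. 0 \<le> d \<and> f d \<le> f b}"
  have "S = {0..} \<inter> (\<lambda>d. f b *\<^sub>R h + d *\<^sub>R e) -` cone_f f h"
    using e by (auto simp: S_def axis_point_in_cone_iff)
  moreover have "closed ((\<lambda>d. f b *\<^sub>R h + d *\<^sub>R e) -` cone_f f h)"
    by (rule continuous_closed_vimage[OF closed]) (intro continuous_intros)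
  ultimately have "closed S"
    by (simp add: closed_Int)
  moreover have "(x + y) / 2 \<in> S" if "x \<in> S" "y \<in> S" "x \<le> y" for x y
  proof -
    have "f ((x + y) / 2) + f ((y - x) / 2) \<le> max (f x) (f y)"
      using two_point[of "(x + y) / 2" "(y - x) / 2"] that by (simp add: S_def field_simps)
    then show ?thesis
      using that f_nonneg[of "(y - x) / 2"] by (auto simp: S_def)
  qed
  moreover have "0 \<in> S" "b \<in> S"
    using \<open>a \<in> {0..}\<close> \<open>a \<le> b\<close> f_nonneg[of b] by (simp_all add: S_def f_zero)
  ultimately have "a \<in> S"
    by (rule closed_midpoint_convex_mem) (use \<open>a \<in> {0..}\<close> \<open>a \<le> b\<close> in simp_all)
  then show "f a \<le> f b"
    by (simp add: S_def)
qed

lemma cc_sponge_imp_square_superadditive: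
  assumes cc: "cc_sponge (\<preceq>)" and dim: "dim_ge TYPE('a) 3"
  shows "square_superadditive f"
proof -
  obtain e1 where e1: "norm e1 = 1" "e1 \<bullet> h = 0"
    using obtain_unit_orthogonal_axis[OF dim] by auto
  have "h \<noteq> e1"
    using e1 by auto
  have "pairwise orthogonal {h, e1}"
    using e1 by (auto simp: pairwise_def orthogonal_def inner_commute)
  obtain e2 where e2: "norm e2 = 1" "e2 \<bullet> h = 0" "e2 \<bullet> e1 = 0"
    by (rule dim_ge_obtain_orthogonal_unit[OF dim, of "{h, e1}"])
      (use norm_h e1 \<open>h \<noteq> e1\<close> \<open>pairwise orthogonal {h, e1}\<close> in auto)
  show ?thesis
    unfolding square_superadditive_def
  proof (intro allI impI)
    fix a b :: real assume "0 \<le> a" "0 \<le> b"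
    have unit: "e1 \<bullet> e1 = 1" "e2 \<bullet> e2 = 1" "e1 \<bullet> e2 = 0"
      using e1 e2 by (simp_all add: dot_square_norm inner_commute)
    have "norm (a *\<^sub>R e2 - b *\<^sub>R e1) = sqrt (a\<^sup>2 + b\<^sup>2)" "norm (a *\<^sub>R e2 + b *\<^sub>R e1) = sqrt (a\<^sup>2 + b\<^sup>2)"
      unfolding norm_eq_sqrt_inner using unit e2(3)
      by (simp_all add: inner_diff_left inner_diff_right inner_add_left inner_add_right power2_eq_square)
    moreover have "norm (a *\<^sub>R e2) = a"
      using \<open>0 \<le> a\<close> e2 by simp
    ultimately show "f a + f b \<le> f (sqrt (a\<^sup>2 + b\<^sup>2))"
      using cc_sponge_two_point_bound[OF cc e1, of "a *\<^sub>R e2" b] \<open>0 \<le> b\<close> e2 by simp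
  qed
qed

lemma cc_sponge_imp_superadditive:
  assumes cc: "cc_sponge (\<preceq>)" and closed: "closed (cone_f f h)" and dim: "dim_ge TYPE('a) 2"
  shows "superadditive f"
proof -
  obtain e where e: "norm e = 1" "e \<bullet> h = 0"
    using obtain_unit_orthogonal_axis[OF dim] by auto
  have two_point: "f t + f r \<le> max (f \<bar>t - r\<bar>) (f (t + r))" if "0 \<le> t" "0 \<le> r" for t r
  proof -
    have "t *\<^sub>R e - r *\<^sub>R e = (t - r) *\<^sub>R e" "t *\<^sub>R e + r *\<^sub>R e = (t + r) *\<^sub>R e"
      by (simp_all add: algebra_simps)
    then show ?thesis
      using cc_sponge_two_point_bound[OF cc e, of "t *\<^sub>R e" r] e that by simp
  qed
  show ?thesis
    unfolding superadditive_def
  proof (intro allI impI)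
    fix a b :: real assume "0 \<le> a" "0 \<le> b"
    then have "f \<bar>a - b\<bar> \<le> f (a + b)"
      using mono_onD[OF mono_on_if_two_point_bound[OF two_point closed e]] by simp
    then show "f a + f b \<le> f (a + b)"
      using two_point[OF \<open>0 \<le> a\<close> \<open>0 \<le> b\<close>] by simp
  qed
qed

section \<open>Sufficient conditions\<close>

lemma rel_retract:
  assumes K: "acute_superadditive f h" and b: "b \<bullet> h = 0" and u: "u \<bullet> h = 0"
    and acute: "0 \<le> (b - perp h p) \<bullet> u" and rel: "p \<preceq> t *\<^sub>R h + (b + u)"
  shows "p \<preceq> (t - f (norm u)) *\<^sub>R h + b"
proof -
  have "(b - perp h p) \<bullet> h = 0"
    using b by (simp add: inner_diff_left)
  then have "f (norm (b - perp h p)) + f (norm u) \<le> f (norm (b - perp h p + u))"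
    using K u acute unfolding acute_superadditive_def by blast
  moreover have "(b + u) \<bullet> h = 0"
    using b u by (simp add: inner_add_left)
  then have "f (norm (b + u - perp h p)) \<le> t - p \<bullet> h"
    using rel by (simp add: rel_f_iff)
  moreover have "b - perp h p + u = b + u - perp h p"
    by simp
  ultimately show ?thesis
    using b by (simp add: rel_f_iff)
qed

lemma rel_interpolate:
  assumes K: "acute_superadditive f h" and b: "b1 \<bullet> h = 0" "b2 \<bullet> h = 0"
    and rel: "p \<preceq> t1 *\<^sub>R h + b1" "p \<preceq> t2 *\<^sub>R h + b2" and l: "0 \<le> l" "l \<le> 1"
    and s: "t1 - f (l * norm (b1 - b2)) \<le> s" "t2 - f ((1 - l) * norm (b1 - b2)) \<le> s"
  shows "p \<preceq> s *\<^sub>R h + ((1 - l) *\<^sub>R b1 + l *\<^sub>R b2)"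
proof -
  define z where "z = (1 - l) *\<^sub>R b1 + l *\<^sub>R b2"
  have z: "z \<bullet> h = 0"
    using b by (simp add: z_def inner_add_left)
  have "(z - perp h p) \<bullet> (b2 - b1) = - ((z - perp h p) \<bullet> (b1 - b2))"
    by (simp add: inner_diff_right)
  then consider "0 \<le> (z - perp h p) \<bullet> (b1 - b2)" | "0 \<le> (z - perp h p) \<bullet> (b2 - b1)"
    by linarith
  then have "p \<preceq> s *\<^sub>R h + z"
  proof cases
    case 1
    define u where "u = l *\<^sub>R (b1 - b2)"
    have "u \<bullet> h = 0" "norm u = l * norm (b1 - b2)"
      using b l by (simp_all add: u_def inner_diff_left)
    moreover have "z + u = b1"
      by (simp add: u_def z_def algebra_simps)
    moreover have "0 \<le> (z - perp h p) \<bullet> u"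
      using 1 l by (simp add: u_def)
    ultimately have "p \<preceq> (t1 - f (l * norm (b1 - b2))) *\<^sub>R h + z"
      using rel_retract[OF K z, of u p t1] rel(1) by simp
    then show ?thesis
      using rel_raise z s(1) by blast
  next
    case 2
    define u where "u = (1 - l) *\<^sub>R (b2 - b1)"
    have "u \<bullet> h = 0" "norm u = (1 - l) * norm (b1 - b2)"
      using b l by (simp_all add: u_def inner_diff_left norm_minus_commute)
    moreover have "z + u = b2"
      by (simp add: u_def z_def algebra_simps)
    moreover have "0 \<le> (z - perp h p) \<bullet> u"
      using 2 l by (simp add: u_def)
    ultimately have "p \<preceq> (t2 - f ((1 - l) * norm (b1 - b2))) *\<^sub>R h + z"
      using rel_retract[OF K z, of u p t2] rel(2) by simp
    then show ?thesis
      using rel_raise z s(2) by blast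
  qed
  then show ?thesis
    by (simp add: z_def)
qed

lemma cone_mem_if_below_radius:
  assumes closed: "closed (cone_f f h)" and v: "v \<bullet> h = 0" and "0 \<le> t"
    and below: "\<And>r. 0 \<le> r \<Longrightarrow> r < norm v \<Longrightarrow> f r \<le> t"
  shows "t *\<^sub>R h + v \<in> cone_f f h"
proof (cases "v = 0")
  case True
  then show ?thesis
    using \<open>0 \<le> t\<close> by (simp add: mem_cone_f_iff f_zero)
next
  case False
  let ?S = "(\<lambda>c. t *\<^sub>R h + c *\<^sub>R v) -` cone_f f h"
  have "{0..<1} \<subseteq> ?S"
  proof
    fix c :: real assume c: "c \<in> {0..<1}"
    then have "c * norm v < norm v"
      using False by simp
    then have "f (norm (c *\<^sub>R v)) \<le> t"
      using below[of "c * norm v"] c by simp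
    then show "c \<in> ?S"
      using v by (simp add: axis_point_in_cone_iff)
  qed
  moreover have "closed ?S"
    by (rule continuous_closed_vimage[OF closed]) (intro continuous_intros)
  ultimately have "closure {0..<1} \<subseteq> ?S"
    by (rule closure_minimal)
  then show ?thesis
    using subsetD[of _ ?S 1] by simp
qed

lemma upper_bounds_midpoint:
  assumes K: "acute_superadditive f h" and y: "set_le (\<preceq>) P {y1}" "set_le (\<preceq>) P {y2}"
  shows "set_le (\<preceq>) P {(max (y1 \<bullet> h) (y2 \<bullet> h) - f (norm (perp h y1 - perp h y2) / 2)) *\<^sub>R h
      + (1 / 2) *\<^sub>R (perp h y1 + perp h y2)}"
proof -
  let ?s = "max (y1 \<bullet> h) (y2 \<bullet> h) - f (norm (perp h y1 - perp h y2) / 2)"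
  have "p \<preceq> ?s *\<^sub>R h + ((1 - 1 / 2) *\<^sub>R perp h y1 + (1 / 2) *\<^sub>R perp h y2)" if "p \<in> P" for p
  proof (rule rel_interpolate[OF K inner_perp_h inner_perp_h])
    show "p \<preceq> (y1 \<bullet> h) *\<^sub>R h + perp h y1" "p \<preceq> (y2 \<bullet> h) *\<^sub>R h + perp h y2"
      using y that by (simp_all add: set_le_def axis_perp_decomp)
  qed simp_all
  then show ?thesis
    by (simp add: set_le_def scaleR_add_right)
qed

lemma upper_bounds_of_near_minimal_height_close:
  assumes K: "acute_superadditive f h" and mono: "mono_on {0..} f"
    and lowest: "\<And>y. set_le (\<preceq>) P {y} \<Longrightarrow> \<mu> \<le> y \<bullet> h" and "0 < \<epsilon>"
  shows "\<exists>\<delta>>0. \<forall>y1 y2. set_le (\<preceq>) P {y1} \<longrightarrow> y1 \<bullet> h < \<mu> + \<delta> \<longrightarrow>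
      set_le (\<preceq>) P {y2} \<longrightarrow> y2 \<bullet> h < \<mu> + \<delta> \<longrightarrow> dist y1 y2 < \<epsilon>"
proof -
  define \<delta> where "\<delta> = min (\<epsilon> / 2) (f (\<epsilon> / 4))"
  have \<delta>: "0 < \<delta>" "\<delta> \<le> \<epsilon> / 2" "\<delta> \<le> f (\<epsilon> / 4)"
    using \<open>0 < \<epsilon>\<close> f_pos by (simp_all add: \<delta>_def)
  have "dist y1 y2 < \<epsilon>"
    if y: "set_le (\<preceq>) P {y1}" "set_le (\<preceq>) P {y2}" and near: "y1 \<bullet> h < \<mu> + \<delta>" "y2 \<bullet> h < \<mu> + \<delta>"
    for y1 y2
  proof -
    define d where "d = norm (perp h y1 - perp h y2)"
    have "\<mu> \<le> max (y1 \<bullet> h) (y2 \<bullet> h) - f (d / 2)"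
      using lowest[OF upper_bounds_midpoint[OF K y]] by (simp add: d_def inner_add_left)
    then have "f (d / 2) < f (\<epsilon> / 4)"
      using near \<delta>(3) by simp
    then have "d < \<epsilon> / 2"
      using mono_onD[OF mono, of "\<epsilon> / 4" "d / 2"] \<open>0 < \<epsilon>\<close> by fastforce
    moreover have "\<bar>y1 \<bullet> h - y2 \<bullet> h\<bar> < \<epsilon> / 2"
      unfolding abs_diff_less_iff using near lowest[OF y(1)] lowest[OF y(2)] \<delta>(2) by auto
    ultimately show ?thesis
      using dist_le_height_perp[of y1 y2] by (simp add: d_def)
  qed
  then show ?thesis
    using \<delta>(1) by blast
qed

lemma lowest_upper_bound_below_radius:
  assumes K: "acute_superadditive f h"
    and x: "set_le (\<preceq>) P {\<mu> *\<^sub>R h + w}" "w \<bullet> h = 0"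
    and lowest: "\<And>y. set_le (\<preceq>) P {y} \<Longrightarrow> \<mu> \<le> y \<bullet> h"
    and y: "set_le (\<preceq>) P {t *\<^sub>R h + b}" "b \<bullet> h = 0"
    and r: "0 \<le> r" "r < norm (b - w)"
  shows "f r \<le> t - \<mu>"
proof -
  define d where "d = norm (b - w)"
  define l where "l = 1 - r / d"
  have "0 < d"
    using r unfolding d_def by linarith
  moreover have "norm (w - b) = d"
    by (simp add: d_def norm_minus_commute)
  ultimately have l: "0 \<le> l" "l \<le> 1" "l * norm (w - b) = d - r" "(1 - l) * norm (w - b) = r"
    using r by (simp_all add: l_def d_def field_simps)
  define s where "s = max (\<mu> - f (d - r)) (t - f r)"
  have "p \<preceq> s *\<^sub>R h + ((1 - l) *\<^sub>R w + l *\<^sub>R b)" if "p \<in> P" for p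
  proof (rule rel_interpolate[OF K x(2) y(2) _ _ l(1,2)])
    show "p \<preceq> \<mu> *\<^sub>R h + w" "p \<preceq> t *\<^sub>R h + b"
      using x y that by (simp_all add: set_le_def)
    show "\<mu> - f (l * norm (w - b)) \<le> s" "t - f ((1 - l) * norm (w - b)) \<le> s"
      unfolding l(3,4) s_def by simp_all
  qed
  then have "\<mu> \<le> s"
    using lowest[of "s *\<^sub>R h + ((1 - l) *\<^sub>R w + l *\<^sub>R b)"] x(2) y(2)
    by (simp add: set_le_def inner_add_left)
  moreover have "0 < f (d - r)"
    using f_pos r by (simp add: d_def)
  ultimately show ?thesis
    by (simp add: s_def)
qed

lemma lowest_upper_bound_is_join:
  assumes K: "acute_superadditive f h" and closed: "closed (cone_f f h)"
    and x: "set_le (\<preceq>) P {x}" and lowest: "\<And>y. set_le (\<preceq>) P {y} \<Longrightarrow> x \<bullet> h \<le> y \<bullet> h"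
  shows "is_join (\<preceq>) P x"
  unfolding is_join_def
proof (intro conjI allI impI)
  show "set_le (\<preceq>) P {x}"
    by (fact x)
  fix y assume y: "set_le (\<preceq>) P {y}"
  obtain \<mu> w where xc: "x = \<mu> *\<^sub>R h + w" "w \<bullet> h = 0"
    by (rule axis_coordinates)
  obtain t b where yc: "y = t *\<^sub>R h + b" "b \<bullet> h = 0"
    by (rule axis_coordinates)
  have "\<mu> \<le> t"
    using lowest[OF y] xc yc by simp
  have "f r \<le> t - \<mu>" if "0 \<le> r" "r < norm (b - w)" for r
    using lowest_upper_bound_below_radius[OF K x[unfolded xc(1)] xc(2) _ y[unfolded yc(1)] yc(2) that]
      lowest xc by simp
  then have "(t - \<mu>) *\<^sub>R h + (b - w) \<in> cone_f f h"
    using cone_mem_if_below_radius[OF closed] xc(2) yc(2) \<open>\<mu> \<le> t\<close> by (simp add: inner_diff_left)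
  moreover have "y - x = (t - \<mu>) *\<^sub>R h + (b - w)"
    by (simp add: xc yc algebra_simps)
  ultimately show "x \<preceq> y"
    by (simp add: rel_f_def)
qed

end

locale hilbert_axis_cone = axis_cone h f for h :: "'a::{real_inner, complete_space}" and f
begin

lemma lowest_upper_bound_exists:
  assumes K: "acute_superadditive f h" and mono: "mono_on {0..} f"
    and closed: "closed (cone_f f h)" and P: "P \<noteq> {}" "right_bounded (\<preceq>) P"
  obtains x where "set_le (\<preceq>) P {x}" "\<And>y. set_le (\<preceq>) P {y} \<Longrightarrow> x \<bullet> h \<le> y \<bullet> h"
proof -
  define U where "U = {y. set_le (\<preceq>) P {y}}"
  define \<mu> where "\<mu> = Inf ((\<lambda>y. y \<bullet> h) ` U)"
  obtain p where "p \<in> P"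
    using P by blast
  then have bdd: "bdd_below ((\<lambda>y. y \<bullet> h) ` U)"
    using height_le_of_rel by (fastforce simp: U_def set_le_def intro: bdd_belowI2)
  have "U \<noteq> {}"
    using P(2) by (auto simp: U_def right_bounded_def)
  have \<mu>_le: "\<mu> \<le> y \<bullet> h" if "y \<in> U" for y
    using cInf_lower[OF _ bdd] that by (simp add: \<mu>_def)
  have near_close: "\<exists>\<delta>>0. \<forall>y1\<in>U. \<forall>y2\<in>U. y1 \<bullet> h < \<mu> + \<delta> \<longrightarrow> y2 \<bullet> h < \<mu> + \<delta> \<longrightarrow> dist y1 y2 < \<epsilon>"
    if "0 < \<epsilon>" for \<epsilon>
    using upper_bounds_of_near_minimal_height_close[OF K mono \<mu>_le[unfolded U_def mem_Collect_eq] that]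
    by (simp add: U_def)
  have "closed U"
    unfolding U_def by (rule closed_upper_bounds[OF closed])
  moreover have "continuous_on U (\<lambda>y. y \<bullet> h)"
    by (intro continuous_intros)
  ultimately obtain x where "x \<in> U" "\<And>y. y \<in> U \<Longrightarrow> x \<bullet> h \<le> y \<bullet> h"
    using closed_attains_Inf_if_near_minimizers_close[OF _ \<open>U \<noteq> {}\<close> _ bdd] near_close
    unfolding \<mu>_def by blast
  then show ?thesis
    using that by (simp add: U_def)
qed

theorem cc_sponge_if_acute_superadditive:
  assumes K: "acute_superadditive f h" and mono: "mono_on {0..} f"
    and closed: "closed (cone_f f h)"
  shows "cc_sponge (\<preceq>)"
  unfolding cc_sponge_def
proof (intro conjI allI impI)
  show "orientation (\<preceq>)"
    by (rule orientation_rel_f)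
  fix P assume "P \<noteq> {} \<and> right_bounded (\<preceq>) P"
  then obtain x where "set_le (\<preceq>) P {x}" "\<And>y. set_le (\<preceq>) P {y} \<Longrightarrow> x \<bullet> h \<le> y \<bullet> h"
    using lowest_upper_bound_exists[OF K mono closed] by blast
  then show "\<exists>x. is_join (\<preceq>) P x"
    using lowest_upper_bound_is_join[OF K closed] by blast
qed

theorem cc_sponge_iff_closed_square_superadditive:
  assumes dim: "dim_ge TYPE('a) 3"
  shows "cc_sponge (\<preceq>) \<longleftrightarrow> closed (cone_f f h) \<and> square_superadditive f"
proof
  assume cc: "cc_sponge (\<preceq>)"
  then have sq: "square_superadditive f"
    using dim by (rule cc_sponge_imp_square_superadditive)
  obtain e where "norm e = 1" "e \<bullet> h = 0"
    using obtain_unit_orthogonal_axis[OF dim] by auto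
  with cc sq show "closed (cone_f f h) \<and> square_superadditive f"
    using closed_cone_if_cc_sponge square_superadditive_strict_mono[OF sq f_pos] by blast
next
  assume "closed (cone_f f h) \<and> square_superadditive f"
  then have closed: "closed (cone_f f h)" and sq: "square_superadditive f"
    by auto
  have mono: "mono_on {0..} f"
    by (rule strict_mono_on_imp_mono_on[OF square_superadditive_strict_mono[OF sq f_pos]])
  show "cc_sponge (\<preceq>)"
    by (rule cc_sponge_if_acute_superadditive[OF
          acute_superadditive_if_square_superadditive[OF sq mono] mono closed])
qed

theorem cc_sponge_iff_superadditive:
  assumes dim: "dim (UNIV :: 'a set) = 2" and closed: "closed (cone_f f h)"
  shows "cc_sponge (\<preceq>) \<longleftrightarrow> superadditive f"
proof
  assume "cc_sponge (\<preceq>)"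
  then show "superadditive f"
    using cc_sponge_imp_superadditive closed dim_ge_dim_UNIV[where 'a='a] dim by simp
next
  assume sa: "superadditive f"
  have "h \<noteq> 0"
    using norm_h by auto
  show "cc_sponge (\<preceq>)"
    using cc_sponge_if_acute_superadditive acute_superadditive_if_superadditive_dim_eq_2[OF dim \<open>h \<noteq> 0\<close> sa]
      superadditive_mono[OF sa f_nonneg] closed by blast
qed

end

theorem mainTheorem1:
  fixes h :: "'a::{real_inner, complete_space}"
    and f :: "real \<Rightarrow> real"
  assumes dim2: "dim_ge TYPE('a) 2"
    and unit: "norm h = 1"
    and f_nonneg: "\<forall>d\<ge>0. f d \<ge> 0"
    and f_pos: "\<forall>d\<ge>0. f d > 0 \<longleftrightarrow> d > 0"
  shows "(dim_ge TYPE('a) 3 \<longrightarrow>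
            (cc_sponge (rel_f f h) \<longleftrightarrow>
               closed {(x, y). rel_f f h x y} \<and> square_superadditive f))
       \<and> (dim (UNIV :: 'a set) = 2 \<and> closed {(x, y). rel_f f h x y} \<longrightarrow>
            (cc_sponge (rel_f f h) \<longleftrightarrow> superadditive f))"
proof -
  interpret hilbert_axis_cone h f
  proof
    show "norm h = 1"
      by (fact unit)
    show "f 0 = 0"
      using f_nonneg f_pos by force
    show "0 < f d" if "0 < d" for d
      using f_pos that by auto
  qed
  show ?thesis
    using cc_sponge_iff_closed_square_superadditive cc_sponge_iff_superadditive closed_rel_f_iff
    by auto
qed

end
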